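(* Let $G$ be a connected graph on at least two vertices, and let $b(G)$ denote its number of blocks. Then \[ \operatorname{cdim}(G)\geq\frac{b(G)+1}{2}. \]
   Context: All graphs are finite, simple, undirected and nonempty. A block of a graph is a maximal connected subgraph that has no cut vertex of its own (so each block of a connected graph with at least two vertices is either a bridge $K_2$ or a maximal $2$-connected subgraph). For distinct vertices $v,w$, $\kappa(v,w)$ is the maximum number of internally vertex-disjoint $v$–$w$ paths (an edge $vw$ counts as one such path); $\kappa(v,v)=\infty$. For an ordered vertex set $W=(w_1,\ldots,w_k)$, $r_G(v,W)=[\kappa(v,w_1),\ldots,\kappa(v,w_k)]$. $W$ is resolving if $r_G(v_1,W)=r_G(v_2,W)$ implies $v_1=v_2$. The connectivity dimension $\operatorname{cdim}(G)$ is the minimum cardinality of a resolving set. *)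

theory Defs
  imports Complex_Main "HOL-Library.Extended_Nat"
begin

definition simple_graph :: "'a set \<Rightarrow> 'a set set \<Rightarrow> bool" where
  "simple_graph V E \<longleftrightarrow> finite V \<and> V \<noteq> {} \<and>
     (\<forall>e\<in>E. \<exists>u v. e = {u, v} \<and> u \<noteq> v \<and> u \<in> V \<and> v \<in> V)"

definition adj_rel :: "'a set \<Rightarrow> 'a set set \<Rightarrow> ('a \<times> 'a) set" where
  "adj_rel V E = {(x, y). x \<in> V \<and> y \<in> V \<and> {x, y} \<in> E}"

definition connected_graph :: "'a set \<Rightarrow> 'a set set \<Rightarrow> bool" where
  "connected_graph V E \<longleftrightarrow> V \<noteq> {} \<and> (\<forall>u\<in>V. \<forall>v\<in>V. (u, v) \<in> (adj_rel V E)\<^sup>*)"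

definition subgraph :: "'a set \<Rightarrow> 'a set set \<Rightarrow> 'a set \<Rightarrow> 'a set set \<Rightarrow> bool" where
  "subgraph B F V E \<longleftrightarrow> B \<subseteq> V \<and> F \<subseteq> E \<and> (\<forall>e\<in>F. e \<subseteq> B)"

definition del_vertex :: "'a \<Rightarrow> 'a set \<Rightarrow> 'a set set \<Rightarrow> 'a set \<times> 'a set set" where
  "del_vertex x B F = (B - {x}, {e\<in>F. x \<notin> e})"

definition cut_vertex :: "'a set \<Rightarrow> 'a set set \<Rightarrow> 'a \<Rightarrow> bool" where
  "cut_vertex B F x \<longleftrightarrow> x \<in> B \<and> B - {x} \<noteq> {} \<and>
     \<not> connected_graph (B - {x}) {e\<in>F. x \<notin> e}"

definition is_block :: "'a set \<Rightarrow> 'a set set \<Rightarrow> 'a set \<Rightarrow> 'a set set \<Rightarrow> bool" where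
  "is_block V E B F \<longleftrightarrow>
     subgraph B F V E \<and> connected_graph B F \<and> (\<forall>x. \<not> cut_vertex B F x) \<and>
     (\<forall>B' F'. subgraph B' F' V E \<and> connected_graph B' F' \<and> (\<forall>x. \<not> cut_vertex B' F' x)
        \<and> B \<subseteq> B' \<and> F \<subseteq> F' \<longrightarrow> B' = B \<and> F' = F)"

definition num_blocks :: "'a set \<Rightarrow> 'a set set \<Rightarrow> nat" where
  "num_blocks V E = card {(B, F). is_block V E B F}"

definition is_path :: "'a set \<Rightarrow> 'a set set \<Rightarrow> 'a \<Rightarrow> 'a \<Rightarrow> 'a list \<Rightarrow> bool" where
  "is_path V E v w xs \<longleftrightarrow> xs \<noteq> [] \<and> hd xs = v \<and> last xs = w \<and> distinct xs \<and> set xs \<subseteq> V \<and>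
     (\<forall>i. Suc i < length xs \<longrightarrow> {xs ! i, xs ! Suc i} \<in> E)"

definition interior :: "'a list \<Rightarrow> 'a set" where
  "interior xs = set (butlast (tl xs))"

definition kappa :: "'a set \<Rightarrow> 'a set set \<Rightarrow> 'a \<Rightarrow> 'a \<Rightarrow> enat" where
  "kappa V E v w = (if v = w then \<infinity> else
     enat (Max {card P | P. P \<subseteq> {xs. is_path V E v w xs} \<and>
                 pairwise (\<lambda>p q. interior p \<inter> interior q = {}) P}))"

text \<open>W is resolving: vertices are distinguished by their connectivity vectors to W
  (an ordered tuple W is resolving iff its underlying set is).\<close>
definition resolving :: "'a set \<Rightarrow> 'a set set \<Rightarrow> 'a set \<Rightarrow> bool" where
  "resolving V E W \<longleftrightarrow> W \<subseteq> V \<and>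
     (\<forall>v1\<in>V. \<forall>v2\<in>V. (\<forall>w\<in>W. kappa V E v1 w = kappa V E v2 w) \<longrightarrow> v1 = v2)"

definition cdim :: "'a set \<Rightarrow> 'a set set \<Rightarrow> nat" where
  "cdim V E = Min {card W | W. resolving V E W}"

end

theory Submission
  imports Defs
begin

text \<open>Root the block structure at a vertex \<open>r\<close> of a resolving set \<open>W\<close>: the root of a block
  \<open>B\<close> is \<open>r\<close> if \<open>r \<in> B\<close>, and otherwise the unique vertex through which \<open>B\<close> is left towards
  \<open>r\<close>. The non-root parts \<open>B - {root B}\<close> are pairwise disjoint and avoid \<open>r\<close>, so at most
  \<open>|W| - 1\<close> blocks meet \<open>W\<close> in their non-root part. Vertices whose connectivities to all of
  \<open>W\<close> equal \<open>1\<close> share a connectivity vector, so there is at most one of them, lying in the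
  non-root part of at most one block. Every other block \<open>B\<close> has a child, i.e. a block rooted at
  a non-root vertex of \<open>B\<close>, that meets \<open>W\<close>: otherwise each non-root \<open>x \<in> B\<close> has
  \<open>\<kappa>(x,w) = 1\<close> for all \<open>w \<in> W\<close> except the root \<open>c\<close> of \<open>B\<close>, hence \<open>\<kappa>(x,c) \<noteq> 1\<close>, and
  \<open>\<kappa>(\<cdot>,c)\<close> maps the \<open>|B| - 1\<close> non-root vertices injectively into \<open>{2..|B| - 1}\<close>.
  Distinct blocks have distinct children, so \<open>b(G) \<le> 2(|W| - 1) + 1\<close>.\<close>

fun walk :: "'a set set \<Rightarrow> 'a list \<Rightarrow> bool" where
  "walk F [] = True"
| "walk F [x] = True"
| "walk F (x # y # xs) = ({x, y} \<in> F \<and> walk F (y # xs))"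

fun walk_edges :: "'a list \<Rightarrow> 'a set set" where
  "walk_edges [] = {}"
| "walk_edges [x] = {}"
| "walk_edges (x # y # xs) = insert {x, y} (walk_edges (y # xs))"

lemma walk_iff_walk_edges_subset: "walk F xs \<longleftrightarrow> walk_edges xs \<subseteq> F"
  by (induction xs rule: walk_edges.induct) auto

lemma walk_walk_edges: "walk (walk_edges xs) xs"
  by (simp add: walk_iff_walk_edges_subset)

lemma walk_edges_subset: "e \<in> walk_edges xs \<Longrightarrow> e \<subseteq> set xs"
  by (induction xs rule: walk_edges.induct) auto

lemma walk_append:
  "walk F (xs @ ys) \<longleftrightarrow> walk F xs \<and> walk F ys \<and> (xs \<noteq> [] \<longrightarrow> ys \<noteq> [] \<longrightarrow> {last xs, hd ys} \<in> F)"
proof (induction xs rule: walk_edges.induct)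
  case (2 x)
  then show ?case by (cases ys) auto
qed auto

lemma walk_Cons: "walk F (x # xs) \<longleftrightarrow> walk F xs \<and> (xs \<noteq> [] \<longrightarrow> {x, hd xs} \<in> F)"
  by (cases xs) auto

lemma walk_rev: "walk F (rev xs) \<longleftrightarrow> walk F xs"
proof (induction xs rule: walk_edges.induct)
  case (3 x y xs)
  then show ?case by (auto simp: walk_append insert_commute)
qed auto

lemma walk_iff_nth: "walk F xs \<longleftrightarrow> (\<forall>i. Suc i < length xs \<longrightarrow> {xs ! i, xs ! Suc i} \<in> F)"
proof (induction xs rule: walk_edges.induct)
  case (3 x y xs)
  show ?case
  proof
    assume "walk F (x # y # xs)"
    with 3 show "\<forall>i. Suc i < length (x # y # xs) \<longrightarrow> {(x # y # xs) ! i, (x # y # xs) ! Suc i} \<in> F"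
      by (auto simp: nth_Cons split: nat.splits)
  next
    assume H: "\<forall>i. Suc i < length (x # y # xs) \<longrightarrow> {(x # y # xs) ! i, (x # y # xs) ! Suc i} \<in> F"
    have "{x, y} \<in> F" using H[rule_format, of 0] by simp
    moreover have "\<forall>i. Suc i < length (y # xs) \<longrightarrow> {(y # xs) ! i, (y # xs) ! Suc i} \<in> F"
      using H[rule_format, of "Suc _"] by auto
    ultimately show "walk F (x # y # xs)" using 3 by auto
  qed
qed auto

lemma walk_avoiding: "walk F xs \<Longrightarrow> z \<notin> set xs \<Longrightarrow> walk {e \<in> F. z \<notin> e} xs"
  by (induction F xs rule: walk.induct) auto

lemma is_path_iff_walk:
  "is_path V E v w xs \<longleftrightarrow> xs \<noteq> [] \<and> hd xs = v \<and> last xs = w \<and> distinct xs \<and> set xs \<subseteq> V \<and> walk E xs"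
  unfolding is_path_def walk_iff_nth ..

abbreviation reach :: "'a set \<Rightarrow> 'a set set \<Rightarrow> ('a \<times> 'a) set" where
  "reach S F \<equiv> (adj_rel S F)\<^sup>*"

lemma adj_rel_iff: "(u, v) \<in> adj_rel S F \<longleftrightarrow> u \<in> S \<and> v \<in> S \<and> {u, v} \<in> F"
  unfolding adj_rel_def by auto

lemma reach_mono: "(u, v) \<in> reach S F \<Longrightarrow> S \<subseteq> S' \<Longrightarrow> F \<subseteq> F' \<Longrightarrow> (u, v) \<in> reach S' F'"
proof -
  assume "(u, v) \<in> reach S F" "S \<subseteq> S'" "F \<subseteq> F'"
  moreover from this have "adj_rel S F \<subseteq> adj_rel S' F'"
    unfolding adj_rel_def by auto
  ultimately show "(u, v) \<in> reach S' F'"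
    using rtrancl_mono by blast
qed

lemma reach_sym: "(u, v) \<in> reach S F \<Longrightarrow> (v, u) \<in> reach S F"
proof -
  have "sym (adj_rel S F)"
    unfolding adj_rel_def sym_def by (auto simp: insert_commute)
  then show "(u, v) \<in> reach S F \<Longrightarrow> (v, u) \<in> reach S F"
    by (meson sym_rtrancl symD)
qed

lemma walk_reach: "walk F xs \<Longrightarrow> set xs \<subseteq> S \<Longrightarrow> xs \<noteq> [] \<Longrightarrow> (hd xs, last xs) \<in> reach S F"
proof (induction F xs rule: walk.induct)
  case (3 F x y xs)
  then have "(y, last (y # xs)) \<in> reach S F" by auto
  moreover have "(x, y) \<in> adj_rel S F" using 3 by (auto simp: adj_rel_iff)
  ultimately show ?case by (auto intro: converse_rtrancl_into_rtrancl)
qed auto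

lemma reach_path:
  assumes "(u, v) \<in> reach S F" "u \<in> S"
  shows "\<exists>xs. xs \<noteq> [] \<and> hd xs = u \<and> last xs = v \<and> distinct xs \<and> set xs \<subseteq> S \<and> walk F xs"
  using assms(1)
proof (induction rule: rtrancl_induct)
  case base
  then show ?case using assms(2) by (intro exI[of _ "[u]"]) auto
next
  case (step z z')
  then obtain xs where xs: "xs \<noteq> []" "hd xs = u" "last xs = z" "distinct xs" "set xs \<subseteq> S" "walk F xs"
    by blast
  show ?case
  proof (cases "z' \<in> set xs")
    case True
    then obtain l1 l2 where sp: "xs = l1 @ z' # l2" by (meson split_list)
    show ?thesis
      apply (rule exI[of _ "l1 @ [z']"])
      using xs sp by (auto simp: walk_append hd_append split: if_splits)
  next
    case False
    show ?thesis
      apply (rule exI[of _ "xs @ [z']"])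
      using xs False step(2) by (auto simp: walk_append adj_rel_iff hd_append)
  qed
qed

lemma connected_graphI:
  assumes "s \<in> S" "\<forall>v\<in>S. (s, v) \<in> reach S F"
  shows "connected_graph S F"
  unfolding connected_graph_def
proof (intro conjI ballI)
  fix u v assume "u \<in> S" "v \<in> S"
  with assms have "(u, s) \<in> reach S F" "(s, v) \<in> reach S F"
    by (auto intro: reach_sym)
  then show "(u, v) \<in> reach S F" by (rule rtrancl_trans)
qed (use assms in auto)

lemma connected_graphD: "connected_graph S F \<Longrightarrow> u \<in> S \<Longrightarrow> v \<in> S \<Longrightarrow> (u, v) \<in> reach S F"
  unfolding connected_graph_def by auto

lemma connected_graph_singleton: "connected_graph {v} F"
  unfolding connected_graph_def by simp

lemma connected_graph_Un:
  assumes "connected_graph S1 F1" "connected_graph S2 F2" "s \<in> S1" "s \<in> S2"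
  shows "connected_graph (S1 \<union> S2) (F1 \<union> F2)"
proof (rule connected_graphI[of s])
  show "\<forall>v\<in>S1 \<union> S2. (s, v) \<in> reach (S1 \<union> S2) (F1 \<union> F2)"
  proof
    fix v assume "v \<in> S1 \<union> S2"
    then consider "v \<in> S1" | "v \<in> S2" by blast
    then show "(s, v) \<in> reach (S1 \<union> S2) (F1 \<union> F2)"
    proof cases
      case 1
      show ?thesis by (rule reach_mono[OF connected_graphD[OF assms(1) assms(3) 1]]) auto
    next
      case 2
      show ?thesis by (rule reach_mono[OF connected_graphD[OF assms(2) assms(4) 2]]) auto
    qed
  qed
qed (use assms in auto)

lemma reach_first_entry:
  assumes "(a, t) \<in> reach S F" "a \<notin> C" "t \<in> C"
  obtains y c where "(a, y) \<in> reach (S - C) F" "y \<notin> C" "c \<in> C" "(y, c) \<in> adj_rel S F"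
proof -
  have "(t \<notin> C \<and> (a, t) \<in> reach (S - C) F) \<or>
    (\<exists>y c. (a, y) \<in> reach (S - C) F \<and> y \<notin> C \<and> c \<in> C \<and> (y, c) \<in> adj_rel S F)"
    using assms(1)
  proof (induction rule: rtrancl_induct)
    case (step z z')
    show ?case
    proof (cases "z \<notin> C \<and> (a, z) \<in> reach (S - C) F")
      case True
      show ?thesis
      proof (cases "z' \<in> C")
        case False
        then have "(z, z') \<in> adj_rel (S - C) F" using step(2) True by (auto simp: adj_rel_iff)
        then show ?thesis using True False by (meson rtrancl.rtrancl_into_rtrancl)
      qed (use True step(2) in blast)
    qed (use step(3) in blast)
  qed (use assms(2) in auto)
  then show ?thesis using assms(3) that by blast
qed

lemma reach_walk_edges_from_hd:
  "v \<in> set q \<Longrightarrow> (hd q, v) \<in> reach (set q) (walk_edges q)"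
proof (induction q rule: walk_edges.induct)
  case (3 x y xs)
  show ?case
  proof (cases "v = x")
    case False
    with 3 have "(y, v) \<in> reach (set (y # xs)) (walk_edges (y # xs))" by simp
    then have "(y, v) \<in> reach (set (x # y # xs)) (walk_edges (x # y # xs))"
      by (rule reach_mono) auto
    moreover have "(x, y) \<in> adj_rel (set (x # y # xs)) (walk_edges (x # y # xs))"
      by (simp add: adj_rel_iff)
    ultimately show ?thesis by (simp add: converse_rtrancl_into_rtrancl)
  qed simp
qed auto

lemma distinct_walk_edges_reach_end:
  assumes "distinct q" "v \<in> set q" "v \<noteq> z"
  shows "\<exists>e\<in>{hd q, last q} - {z}. (e, v) \<in> reach (set q - {z}) {e \<in> walk_edges q. z \<notin> e}"
proof -
  let ?S = "set q - {z}" and ?G = "{e \<in> walk_edges q. z \<notin> e}"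
  obtain l1 l2 where q: "q = l1 @ v # l2" using assms(2) by (meson split_list)
  have wq: "walk (walk_edges q) (l1 @ [v])" "walk (walk_edges q) (v # l2)"
    using walk_walk_edges[of q] unfolding q by (auto simp: walk_append)
  show ?thesis
  proof (cases "z \<in> set (l1 @ [v])")
    case False
    have "(hd (l1 @ [v]), last (l1 @ [v])) \<in> reach ?S ?G"
      by (rule walk_reach[OF walk_avoiding[OF wq(1) False]]) (use False q in auto)
    moreover have "hd (l1 @ [v]) = hd q" using q by (cases l1) auto
    moreover have "hd (l1 @ [v]) \<noteq> z" using False by (cases l1) auto
    ultimately show ?thesis by auto
  next
    case True
    then have z: "z \<notin> set (v # l2)" using assms q by auto
    have "(hd (v # l2), last (v # l2)) \<in> reach ?S ?G"
      by (rule walk_reach[OF walk_avoiding[OF wq(2) z]]) (use z q in auto)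
    moreover have "last q \<noteq> z" using z q by (metis last_appendR last_in_set list.discI)
    ultimately show ?thesis using q by (auto intro: reach_sym)
  qed
qed

lemma connected_graph_walk_edges: "q \<noteq> [] \<Longrightarrow> connected_graph (set q) (walk_edges q)"
  by (rule connected_graphI[of "hd q"]) (auto intro: reach_walk_edges_from_hd)

definition nonseparable :: "'a set \<Rightarrow> 'a set set \<Rightarrow> bool" where
  "nonseparable B F \<longleftrightarrow> connected_graph B F \<and> (\<forall>x. \<not> cut_vertex B F x)"

lemma is_block_iff:
  "is_block V E B F \<longleftrightarrow> subgraph B F V E \<and> nonseparable B F \<and>
     (\<forall>B' F'. subgraph B' F' V E \<and> nonseparable B' F' \<and> B \<subseteq> B' \<and> F \<subseteq> F' \<longrightarrow> B' = B \<and> F' = F)"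
  unfolding is_block_def nonseparable_def by blast

lemma nonseparable_delete_vertex:
  assumes "nonseparable B F" "B - {z} \<noteq> {}"
  shows "connected_graph (B - {z}) {e \<in> F. z \<notin> e}"
proof (cases "z \<in> B")
  case True
  then show ?thesis using assms unfolding nonseparable_def cut_vertex_def by blast
next
  case False
  then have "adj_rel (B - {z}) {e \<in> F. z \<notin> e} = adj_rel B F" unfolding adj_rel_def by auto
  then show ?thesis using assms False unfolding nonseparable_def connected_graph_def by simp
qed

lemma nonseparableI:
  assumes "connected_graph B F" "\<And>z. B - {z} \<noteq> {} \<Longrightarrow> connected_graph (B - {z}) {e \<in> F. z \<notin> e}"
  shows "nonseparable B F"
  using assms unfolding nonseparable_def cut_vertex_def by blast

lemma nonseparable_edge:
  assumes "u \<noteq> v"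
  shows "nonseparable {u, v} {{u, v}}"
proof (rule nonseparableI)
  show conn: "connected_graph {u, v} {{u, v}}"
    by (rule connected_graphI[of u]) (auto simp: adj_rel_iff)
  fix z
  show "connected_graph ({u, v} - {z}) {e \<in> {{u, v}}. z \<notin> e}"
  proof (cases "z = u \<or> z = v")
    case True
    then show ?thesis using assms by (auto simp: insert_Diff_if connected_graph_singleton)
  next
    case False
    then have "{u, v} - {z} = {u, v}" "{e \<in> {{u, v}}. z \<notin> e} = {{u, v}}" by auto
    with conn show ?thesis by simp
  qed
qed

lemma nonseparable_add_path:
  assumes B: "nonseparable B F" and ab: "hd q \<in> B" "last q \<in> B" "hd q \<noteq> last q"
    and q: "distinct q"
  shows "nonseparable (B \<union> set q) (F \<union> walk_edges q)"
proof (rule nonseparableI)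
  show "connected_graph (B \<union> set q) (F \<union> walk_edges q)"
  proof (cases "q = []")
    case False
    with B ab(1) show ?thesis
      by (intro connected_graph_Un connected_graph_walk_edges) (auto simp: nonseparable_def)
  qed (use B in \<open>simp add: nonseparable_def\<close>)
next
  fix z
  let ?S = "B \<union> set q - {z}" and ?G = "{e \<in> F \<union> walk_edges q. z \<notin> e}"
  have "B - {z} \<noteq> {}" using ab by blast
  with B have cB: "connected_graph (B - {z}) {e \<in> F. z \<notin> e}" by (rule nonseparable_delete_vertex)
  have in_B: "(u, v) \<in> reach ?S ?G" if "u \<in> B - {z}" "v \<in> B - {z}" for u v
    by (rule reach_mono[OF connected_graphD[OF cB that]]) auto
  obtain s where s: "s \<in> B - {z}" using \<open>B - {z} \<noteq> {}\<close> by blast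
  show "connected_graph ?S ?G"
  proof (rule connected_graphI[of s])
    show "\<forall>v\<in>?S. (s, v) \<in> reach ?S ?G"
    proof
      fix v assume "v \<in> ?S"
      then consider "v \<in> B - {z}" | "v \<in> set q" "v \<noteq> z" by blast
      then show "(s, v) \<in> reach ?S ?G"
      proof cases
        case 2
        then obtain e where e: "e \<in> {hd q, last q} - {z}"
          "(e, v) \<in> reach (set q - {z}) {e \<in> walk_edges q. z \<notin> e}"
          using distinct_walk_edges_reach_end[OF q] by blast
        have "(e, v) \<in> reach ?S ?G" by (rule reach_mono[OF e(2)]) auto
        moreover have "(s, e) \<in> reach ?S ?G" using in_B s e(1) ab by blast
        ultimately show ?thesis by (rule rtrancl_trans[rotated])
      qed (use in_B s in blast)
    qed
  qed (use s in blast)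
qed

lemma nonseparable_Un:
  assumes B: "nonseparable B F" and C: "nonseparable C G"
    and uv: "u \<in> B" "u \<in> C" "v \<in> B" "v \<in> C" "u \<noteq> v"
  shows "nonseparable (B \<union> C) (F \<union> G)"
proof (rule nonseparableI)
  show "connected_graph (B \<union> C) (F \<union> G)"
    using B C uv by (intro connected_graph_Un) (auto simp: nonseparable_def)
next
  fix z
  define s where "s = (if z = u then v else u)"
  have s: "s \<in> B - {z}" "s \<in> C - {z}" using uv unfolding s_def by auto
  have "connected_graph ((B - {z}) \<union> (C - {z})) ({e \<in> F. z \<notin> e} \<union> {e \<in> G. z \<notin> e})"
    using s by (intro connected_graph_Un nonseparable_delete_vertex[OF B] nonseparable_delete_vertex[OF C]) auto
  moreover have "(B - {z}) \<union> (C - {z}) = B \<union> C - {z}"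
    "{e \<in> F. z \<notin> e} \<union> {e \<in> G. z \<notin> e} = {e \<in> F \<union> G. z \<notin> e}"
    by auto
  ultimately show "connected_graph (B \<union> C - {z}) {e \<in> F \<union> G. z \<notin> e}" by simp
qed

section \<open>Blocks of a connected graph\<close>

locale nontrivial_connected_graph =
  fixes V :: "'a set" and E :: "'a set set"
  assumes simple: "simple_graph V E" and connected: "connected_graph V E" and two_le_card: "card V \<ge> 2"
begin

lemma finite_vertices: "finite V"
  using simple unfolding simple_graph_def by auto

lemma edgeE:
  assumes "e \<in> E"
  obtains u v where "e = {u, v}" "u \<noteq> v" "u \<in> V" "v \<in> V"
  using simple assms that unfolding simple_graph_def by blast

lemma finite_edges: "finite E"
proof (rule finite_subset)
  show "E \<subseteq> Pow V" by (blast elim: edgeE)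
qed (simp add: finite_vertices)

lemma singleton_notin_edges: "{x} \<notin> E"
proof
  assume "{x} \<in> E"
  then obtain u v where "{x} = {u, v}" "u \<noteq> v" by (rule edgeE)
  then show False by (metis insert_absorb2 insert_iff singletonD)
qed

lemma reach_vertices: "u \<in> V \<Longrightarrow> v \<in> V \<Longrightarrow> (u, v) \<in> reach V E"
  using connected by (rule connected_graphD)

lemma two_distinct_vertices:
  obtains u v where "u \<in> V" "v \<in> V" "u \<noteq> v"
  using two_le_card finite_vertices by (metis card_le_Suc0_iff_eq not_less_eq_eq numeral_2_eq_2)

lemma blockD:
  assumes "is_block V E B F"
  shows block_subgraph: "subgraph B F V E" and block_nonseparable: "nonseparable B F"
    and block_maximal: "\<And>B' F'. subgraph B' F' V E \<Longrightarrow> nonseparable B' F' \<Longrightarrow> B \<subseteq> B' \<Longrightarrow> F \<subseteq> F'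
      \<Longrightarrow> B' = B \<and> F' = F"
  using assms unfolding is_block_iff by blast+

lemma block_subset: "is_block V E B F \<Longrightarrow> B \<subseteq> V"
  using block_subgraph unfolding subgraph_def by blast

lemma block_edges_subset: "is_block V E B F \<Longrightarrow> F \<subseteq> E"
  using block_subgraph unfolding subgraph_def by blast

lemma finite_block: "is_block V E B F \<Longrightarrow> finite B"
  using block_subset finite_vertices by (rule finite_subset)

lemma block_connected: "is_block V E B F \<Longrightarrow> connected_graph B F"
  using block_nonseparable unfolding nonseparable_def by blast

lemma block_exists:
  assumes "subgraph B F V E" "nonseparable B F"
  shows "\<exists>B' F'. is_block V E B' F' \<and> B \<subseteq> B' \<and> F \<subseteq> F'"
proof -
  define C where "C = {(X, Y). subgraph X Y V E \<and> nonseparable X Y \<and> B \<subseteq> X \<and> F \<subseteq> Y}"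
  have "C \<subseteq> Pow V \<times> Pow E" unfolding C_def subgraph_def by auto
  then have "finite C" by (rule finite_subset) (simp add: finite_vertices finite_edges)
  moreover have "(B, F) \<in> C" using assms unfolding C_def by auto
  ultimately have "Max ((\<lambda>(X, Y). card X + card Y) ` C) \<in> (\<lambda>(X, Y). card X + card Y) ` C"
    by (intro Max_in) auto
  then obtain X Y where XY: "(X, Y) \<in> C" "card X + card Y = Max ((\<lambda>(X, Y). card X + card Y) ` C)"
    by auto
  have max: "card X' + card Y' \<le> card X + card Y" if "(X', Y') \<in> C" for X' Y'
    unfolding XY(2) using \<open>finite C\<close> that by (intro Max_ge) force+
  have "is_block V E X Y"
    unfolding is_block_iff
  proof (intro conjI allI impI)
    show "subgraph X Y V E" "nonseparable X Y" using XY unfolding C_def by auto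
    fix X' Y' assume H: "subgraph X' Y' V E \<and> nonseparable X' Y' \<and> X \<subseteq> X' \<and> Y \<subseteq> Y'"
    then have "(X', Y') \<in> C" using XY unfolding C_def by auto
    then have "card X' + card Y' \<le> card X + card Y" by (rule max)
    moreover have fin: "finite X'" "finite Y'"
      using H finite_vertices finite_edges unfolding subgraph_def by (auto intro: finite_subset)
    moreover have "card X \<le> card X'" "card Y \<le> card Y'" using H fin by (auto intro: card_mono)
    ultimately have "card X' = card X" "card Y' = card Y" by linarith+
    then show "X' = X" "Y' = Y" using H fin by (metis card_subset_eq)+
  qed
  then show ?thesis using XY unfolding C_def by auto
qed

lemma two_le_card_block:
  assumes blk: "is_block V E B F"
  shows "card B \<ge> 2"
proof (rule ccontr)
  assume "\<not> card B \<ge> 2"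
  moreover have "card B > 0"
    using block_connected[OF blk] finite_block[OF blk] unfolding connected_graph_def by (simp add: card_gt_0_iff)
  ultimately have "card B = 1" by linarith
  then obtain v where vB: "B = {v}" by (rule card_1_singletonE)
  have vV: "v \<in> V" using block_subset[OF blk] vB by auto
  obtain u where "u \<in> V" "u \<noteq> v" by (metis two_distinct_vertices)
  with reach_vertices[OF vV] obtain w where "(v, w) \<in> adj_rel V E" by (metis converse_rtranclE)
  then have w: "w \<noteq> v" "w \<in> V" "{v, w} \<in> E"
    using singleton_notin_edges by (auto simp: adj_rel_iff)
  have "F \<subseteq> {{v, w}}"
  proof
    fix e assume "e \<in> F"
    then have "e \<in> E" "e \<subseteq> {v}" using block_subgraph[OF blk] vB unfolding subgraph_def by auto
    then show "e \<in> {{v, w}}" by (auto elim!: edgeE)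
  qed
  then have "{v, w} = B"
    using block_maximal[OF blk _ nonseparable_edge[OF w(1)[symmetric]]] w vV vB
    unfolding subgraph_def by auto
  then show False using vB w by auto
qed

lemma blocks_eq_if_share_two_vertices:
  assumes B: "is_block V E B F" and C: "is_block V E C G"
    and uv: "u \<in> B" "u \<in> C" "v \<in> B" "v \<in> C" "u \<noteq> v"
  shows "B = C \<and> F = G"
proof -
  have "subgraph (B \<union> C) (F \<union> G) V E"
    using block_subgraph[OF B] block_subgraph[OF C] unfolding subgraph_def by auto
  moreover have "nonseparable (B \<union> C) (F \<union> G)"
    using block_nonseparable[OF B] block_nonseparable[OF C] uv by (rule nonseparable_Un)
  ultimately have "B \<union> C = B \<and> F \<union> G = F" "B \<union> C = C \<and> F \<union> G = G"
    using block_maximal[OF B] block_maximal[OF C] by auto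
  then show ?thesis by auto
qed

lemma block_two_vertices:
  assumes "is_block V E B F"
  obtains u v where "u \<in> B" "v \<in> B" "u \<noteq> v"
  using two_le_card_block[OF assms] finite_block[OF assms]
  by (metis card_le_Suc0_iff_eq not_less_eq_eq numeral_2_eq_2)

lemma block_edges_unique:
  assumes "is_block V E B F" "is_block V E B G"
  shows "F = G"
proof -
  obtain u v where "u \<in> B" "v \<in> B" "u \<noteq> v" using assms(1) by (rule block_two_vertices)
  then show ?thesis using blocks_eq_if_share_two_vertices[OF assms] by blast
qed

text \<open>The detour together with the edge \<open>{x, a}\<close> would be an ear extending the block.\<close>

lemma block_no_detour:
  assumes blk: "is_block V E C G" and x: "x \<in> C" and a: "a \<notin> C" "{x, a} \<in> E"
    and t: "(a, t) \<in> reach (V - {x}) E" "t \<in> C"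
  shows False
proof -
  obtain y c where yc: "(a, y) \<in> reach (V - {x} - C) E" "y \<notin> C" "c \<in> C" "(y, c) \<in> adj_rel (V - {x}) E"
    using reach_first_entry[OF t(1) a(1) t(2)] .
  have aV: "a \<in> V"
  proof -
    obtain u v where "{x, a} = {u, v}" "u \<in> V" "v \<in> V" using a(2) by (rule edgeE)
    then show ?thesis by (metis insertCI insertE singletonD)
  qed
  obtain ys where ys: "ys \<noteq> []" "hd ys = a" "last ys = y" "distinct ys" "set ys \<subseteq> V - {x} - C" "walk E ys"
    using reach_path[OF yc(1)] aV a singleton_notin_edges by fastforce
  define q where "q = x # ys @ [c]"
  have q: "hd q = x" "last q = c" "x \<noteq> c" "distinct q" "walk E q"
    using ys yc x a(2) unfolding q_def by (auto simp: walk_Cons walk_append hd_append adj_rel_iff insert_commute)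
  have "nonseparable (C \<union> set q) (G \<union> walk_edges q)"
    using nonseparable_add_path[OF block_nonseparable[OF blk]] q x yc(3) by simp
  moreover have "subgraph (C \<union> set q) (G \<union> walk_edges q) V E"
    unfolding subgraph_def
  proof (intro conjI)
    show "C \<union> set q \<subseteq> V"
      using block_subset[OF blk] ys(5) x yc(4) unfolding q_def by (auto simp: adj_rel_iff)
    show "G \<union> walk_edges q \<subseteq> E"
      using block_edges_subset[OF blk] q(5) by (simp add: walk_iff_walk_edges_subset)
    show "\<forall>e\<in>G \<union> walk_edges q. e \<subseteq> C \<union> set q"
      using block_subgraph[OF blk] walk_edges_subset unfolding subgraph_def by blast
  qed
  ultimately have "C \<union> set q = C" using block_maximal[OF blk] by blast
  moreover have "a \<in> set q" unfolding q_def using ys by (cases ys) auto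
  ultimately show False using a by auto
qed

definition blocks :: "'a set set" where
  "blocks = {B. \<exists>F. is_block V E B F}"

lemma finite_blocks: "finite blocks"
proof (rule finite_subset)
  show "blocks \<subseteq> Pow V" unfolding blocks_def using block_subset by blast
qed (simp add: finite_vertices)

lemma num_blocks_eq_card_blocks: "num_blocks V E = card blocks"
proof -
  have "inj_on fst {(B, F). is_block V E B F}"
    by (rule inj_onI) (use block_edges_unique in fastforce)
  moreover have "fst ` {(B, F). is_block V E B F} = blocks" unfolding blocks_def by force
  ultimately show ?thesis unfolding num_blocks_def by (metis card_image)
qed

end
section \<open>Local connectivity\<close>

definition disjoint_path_systems :: "'a set \<Rightarrow> 'a set set \<Rightarrow> 'a \<Rightarrow> 'a \<Rightarrow> 'a list set set" where
  "disjoint_path_systems V E x w =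
     {P. P \<subseteq> {xs. is_path V E x w xs} \<and> pairwise (\<lambda>p q. interior p \<inter> interior q = {}) P}"

lemma kappa_eq_Max:
  "x \<noteq> w \<Longrightarrow> kappa V E x w = enat (Max (card ` disjoint_path_systems V E x w))"
  unfolding kappa_def disjoint_path_systems_def by (simp add: image_def) (metis (no_types, lifting))

lemma is_path_inner:
  assumes "is_path V E x w p" "x \<noteq> w"
  obtains m where "p = x # m @ [w]" "interior p = set m"
proof -
  have p: "p \<noteq> []" "hd p = x" "last p = w" using assms(1) unfolding is_path_def by auto
  then have p1: "p = x # tl p" by (cases p) auto
  then have "tl p \<noteq> []" using p assms(2) by (metis last_ConsL)
  then have "tl p = butlast (tl p) @ [w]" using p p1 by (metis append_butlast_last_id last_ConsR)
  with p1 have "p = x # butlast (tl p) @ [w]" by simp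
  then show ?thesis by (rule that) (simp add: interior_def)
qed

lemma path_second_vertex:
  assumes "is_path V E x w p" "x \<noteq> w"
  shows "p ! 1 \<in> V - {x}" "{x, p ! 1} \<in> E" "(p ! 1, w) \<in> reach (V - {x}) E"
proof -
  obtain m where m: "p = x # m @ [w]" using is_path_inner[OF assms] .
  have p: "distinct p" "set p \<subseteq> V" "walk E p" using assms(1) unfolding is_path_iff_walk by auto
  have second: "p ! 1 = hd (m @ [w])" using m by (cases m) auto
  have sub: "set (m @ [w]) \<subseteq> V - {x}" using m p by auto
  then show "p ! 1 \<in> V - {x}" unfolding second by (cases m) auto
  show "{x, p ! 1} \<in> E" using p(3) m second by (simp add: walk_Cons)
  have "(hd (m @ [w]), last (m @ [w])) \<in> reach (V - {x}) E"
    using p(3) m sub by (intro walk_reach) (simp_all add: walk_Cons)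
  then show "(p ! 1, w) \<in> reach (V - {x}) E" using second by simp
qed

lemma inj_on_second_vertex:
  assumes "x \<noteq> w" "P \<in> disjoint_path_systems V E x w"
  shows "inj_on (\<lambda>p. p ! 1) P"
proof
  fix p q assume pq: "p \<in> P" "q \<in> P" "p ! 1 = q ! 1"
  have paths: "is_path V E x w p" "is_path V E x w q"
    using assms(2) pq unfolding disjoint_path_systems_def by auto
  obtain mp where mp: "p = x # mp @ [w]" "interior p = set mp" using is_path_inner[OF paths(1) assms(1)] .
  obtain mq where mq: "q = x # mq @ [w]" "interior q = set mq" using is_path_inner[OF paths(2) assms(1)] .
  have dist: "distinct p" "distinct q" using paths unfolding is_path_def by auto
  show "p = q"
  proof (rule ccontr)
    assume "p \<noteq> q"
    then have "interior p \<inter> interior q = {}"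
      using assms(2) pq unfolding disjoint_path_systems_def pairwise_def by blast
    then have disj: "set mp \<inter> set mq = {}" using mp mq by simp
    show False
    proof (cases mp)
      case Nil
      then have "mq = []" using pq mp mq dist by (cases mq) auto
      then show False using \<open>p \<noteq> q\<close> mp mq Nil by simp
    next
      case (Cons a mp')
      then have "mq \<noteq> []" "q ! 1 = a" using pq mp mq dist by auto
      then have "a \<in> set mq" using mq by (cases mq) auto
      then show False using disj Cons by auto
    qed
  qed
qed

lemma card_disjoint_path_system_le:
  assumes "x \<noteq> w" "P \<in> disjoint_path_systems V E x w" "\<forall>p\<in>P. p ! 1 \<in> S" "finite S"
  shows "card P \<le> card S"
proof -
  have inj: "inj_on (\<lambda>p. p ! 1) P" by (rule inj_on_second_vertex[OF assms(1,2)])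
  have sub: "(\<lambda>p. p ! 1) ` P \<subseteq> S" using assms(3) by auto
  have "finite P" using finite_imageD[OF finite_subset[OF sub assms(4)] inj] .
  then show ?thesis using card_inj_on_le[OF inj sub assms(4)] by simp
qed

context nontrivial_connected_graph
begin

lemma kappa_attained:
  assumes "x \<noteq> w"
  shows "\<exists>P\<in>disjoint_path_systems V E x w. kappa V E x w = enat (card P) \<and>
    (\<forall>P'\<in>disjoint_path_systems V E x w. card P' \<le> card P)"
proof -
  let ?D = "disjoint_path_systems V E x w"
  have "card P \<le> card (V - {x})" if P: "P \<in> ?D" for P
  proof (rule card_disjoint_path_system_le[OF assms P])
    show "\<forall>p\<in>P. p ! 1 \<in> V - {x}"
      using P path_second_vertex(1)[OF _ assms] unfolding disjoint_path_systems_def by blast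
  qed (simp add: finite_vertices)
  then have "card ` ?D \<subseteq> {..card (V - {x})}" by auto
  then have "finite (card ` ?D)" by (rule finite_subset) simp
  moreover have "{} \<in> ?D" unfolding disjoint_path_systems_def by auto
  ultimately have "Max (card ` ?D) \<in> card ` ?D" by (intro Max_in) auto
  then obtain P where P: "P \<in> ?D" "card P = Max (card ` ?D)" by auto
  have "card P' \<le> card P" if "P' \<in> ?D" for P'
    unfolding P(2) using \<open>finite (card ` ?D)\<close> that by (intro Max_ge) auto
  then show ?thesis using P kappa_eq_Max[OF assms, of V E] by (intro bexI[of _ P]) simp_all
qed

lemma one_le_kappa:
  assumes "x \<noteq> w" "x \<in> V" "w \<in> V"
  shows "kappa V E x w \<ge> 1"
proof -
  obtain xs where "xs \<noteq> []" "hd xs = x" "last xs = w" "distinct xs" "set xs \<subseteq> V" "walk E xs"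
    using reach_path[OF reach_vertices[OF assms(2,3)] assms(2)] by blast
  then have "{xs} \<in> disjoint_path_systems V E x w"
    unfolding disjoint_path_systems_def is_path_iff_walk by simp
  moreover obtain P where "P \<in> disjoint_path_systems V E x w" "kappa V E x w = enat (card P)"
    "\<forall>P'\<in>disjoint_path_systems V E x w. card P' \<le> card P"
    using kappa_attained[OF assms(1)] by blast
  ultimately have "card {xs} \<le> card P" by blast
  then have "1 \<le> card P" by simp
  then show ?thesis using \<open>kappa V E x w = enat (card P)\<close> by (simp add: one_enat_def)
qed

lemma path_second_vertex_in_block:
  assumes blk: "is_block V E B F" and "x \<in> B" "c \<in> B" "x \<noteq> c" and p: "is_path V E x c p"
  shows "p ! 1 \<in> B"
proof (rule ccontr)
  assume "p ! 1 \<notin> B"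
  moreover note path_second_vertex[OF p \<open>x \<noteq> c\<close>]
  ultimately show False using block_no_detour[OF blk \<open>x \<in> B\<close>] \<open>c \<in> B\<close> by blast
qed

lemma kappa_le_card_block:
  assumes blk: "is_block V E B F" and xc: "x \<in> B" "c \<in> B" "x \<noteq> c"
  shows "kappa V E x c \<le> enat (card B - 1)"
proof -
  obtain P where P: "P \<in> disjoint_path_systems V E x c" "kappa V E x c = enat (card P)"
    using kappa_attained[OF xc(3)] by blast
  have "\<forall>p\<in>P. p ! 1 \<in> B - {x}"
    using P(1) path_second_vertex_in_block[OF blk xc] path_second_vertex(1)[OF _ xc(3)]
    unfolding disjoint_path_systems_def by blast
  then have "card P \<le> card (B - {x})"
    using card_disjoint_path_system_le[OF xc(3) P(1)] finite_block[OF blk] by blast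
  then show ?thesis using P(2) xc(1) finite_block[OF blk] by simp
qed

text \<open>Two internally disjoint \<open>x\<close>--\<open>w\<close> paths form a cycle through \<open>x\<close> and \<open>w\<close>: the edge from \<open>x\<close>
  to the second vertex \<open>y\<close> of one path, closed up by an ear from \<open>y\<close> back to \<open>x\<close>.\<close>

lemma two_disjoint_paths_common_block:
  assumes "x \<noteq> w" "P \<in> disjoint_path_systems V E x w" "p \<in> P" "q \<in> P" "p \<noteq> q"
  shows "\<exists>B F. is_block V E B F \<and> x \<in> B \<and> w \<in> B"
proof -
  have paths: "is_path V E x w p" "is_path V E x w q"
    using assms(2-4) unfolding disjoint_path_systems_def by auto
  obtain mp where mp: "p = x # mp @ [w]" "interior p = set mp" using is_path_inner[OF paths(1) assms(1)] .
  obtain mq where mq: "q = x # mq @ [w]" "interior q = set mq" using is_path_inner[OF paths(2) assms(1)] .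
  have p: "distinct p" "set p \<subseteq> V" "walk E p" and q: "distinct q" "set q \<subseteq> V" "walk E q"
    using paths unfolding is_path_iff_walk by auto
  have "interior p \<inter> interior q = {}"
    using assms(2-5) unfolding disjoint_path_systems_def pairwise_def by blast
  then have disj: "set mp \<inter> set mq = {}" using mp(2) mq(2) by simp
  define y where "y = hd (mp @ [w])"
  define ear where "ear = mp @ [w] @ rev mq @ [x]"
  have yx: "y \<noteq> x" using p(1) mp(1) unfolding y_def by (cases mp) auto
  have ear: "hd ear = y" "last ear = x" "distinct ear"
    unfolding ear_def y_def using p(1) q(1) mp(1) mq(1) disj assms(1) by (auto simp: hd_append)
  have "walk E (rev q)" using q(3) walk_rev by blast
  then have walks: "{x, y} \<in> E" "walk E ear"
    using p(3) mp(1) mq(1) unfolding ear_def y_def by (auto simp: walk_Cons walk_append)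
  have "nonseparable ({x, y} \<union> set ear) ({{x, y}} \<union> walk_edges ear)"
    using nonseparable_add_path[OF nonseparable_edge[OF yx[symmetric]]] ear yx by simp
  moreover have "subgraph ({x, y} \<union> set ear) ({{x, y}} \<union> walk_edges ear) V E"
    unfolding subgraph_def
  proof (intro conjI)
    show "{x, y} \<union> set ear \<subseteq> V" using p(2) q(2) mp(1) mq(1) unfolding ear_def y_def by (cases mp) auto
    show "{{x, y}} \<union> walk_edges ear \<subseteq> E" using walks by (simp add: walk_iff_walk_edges_subset)
    show "\<forall>e\<in>{{x, y}} \<union> walk_edges ear. e \<subseteq> {x, y} \<union> set ear" using walk_edges_subset by blast
  qed
  ultimately obtain B F where "is_block V E B F" "{x, y} \<union> set ear \<subseteq> B"
    using block_exists by blast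
  moreover have "w \<in> set ear" unfolding ear_def by simp
  ultimately show ?thesis by blast
qed

lemma kappa_ne_one_common_block:
  assumes "x \<noteq> w" "x \<in> V" "w \<in> V" "kappa V E x w \<noteq> 1"
  shows "\<exists>B F. is_block V E B F \<and> x \<in> B \<and> w \<in> B"
proof -
  obtain P where P: "P \<in> disjoint_path_systems V E x w" "kappa V E x w = enat (card P)"
    using kappa_attained[OF assms(1)] by blast
  have "card P \<noteq> 1" using P(2) assms(4) by (simp add: one_enat_def)
  moreover have "card P \<ge> 1" using P(2) one_le_kappa[OF assms(1-3)] by (simp add: one_enat_def)
  ultimately have "card P \<ge> 2" by linarith
  then obtain p q where "p \<in> P" "q \<in> P" "p \<noteq> q"
    by (metis One_nat_def card.infinite card_le_Suc0_iff_eq not_less_eq_eq numeral_2_eq_2 zero_le)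
  then show ?thesis using two_disjoint_paths_common_block[OF assms(1) P(1)] by blast
qed

lemma kappa_in_block_range:
  assumes blk: "is_block V E B F" and "x \<in> B" "c \<in> B" "x \<noteq> c" "kappa V E x c \<noteq> 1"
  shows "kappa V E x c \<in> enat ` {2..card B - 1}"
proof -
  obtain n where n: "kappa V E x c = enat n" using kappa_attained[OF \<open>x \<noteq> c\<close>] by blast
  have "n \<le> card B - 1" using kappa_le_card_block[OF assms(1-4)] n by simp
  moreover have "n \<ge> 1" using one_le_kappa[OF \<open>x \<noteq> c\<close>] block_subset[OF blk] assms(2,3) n
    by (auto simp: one_enat_def)
  moreover have "n \<noteq> 1" using assms(5) n by (simp add: one_enat_def)
  ultimately show ?thesis using n by auto
qed

end

section \<open>Rooting the block structure\<close>

locale rooted_graph = nontrivial_connected_graph +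
  fixes r :: 'a
  assumes root_vertex: "r \<in> V"
begin

definition exit_vertex :: "'a set \<Rightarrow> 'a \<Rightarrow> bool" where
  "exit_vertex B x \<longleftrightarrow> x \<in> B \<and> (\<exists>y\<in>V - B. {x, y} \<in> E \<and> (y, r) \<in> reach (V - B) E)"

definition block_root :: "'a set \<Rightarrow> 'a" where
  "block_root B = (if r \<in> B then r else THE x. exit_vertex B x)"

definition nonroot_part :: "'a set \<Rightarrow> 'a set" where
  "nonroot_part B = B - {block_root B}"

lemma exit_vertex_exists:
  assumes blk: "is_block V E B F" and "r \<notin> B"
  shows "\<exists>x. exit_vertex B x"
proof -
  obtain b where b: "b \<in> B" using block_connected[OF blk] unfolding connected_graph_def by auto
  have "(r, b) \<in> reach V E" using reach_vertices root_vertex block_subset[OF blk] b by blast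
  then obtain y c where "(r, y) \<in> reach (V - B) E" "y \<notin> B" "c \<in> B" "(y, c) \<in> adj_rel V E"
    using reach_first_entry \<open>r \<notin> B\<close> b by metis
  then have "exit_vertex B c" unfolding exit_vertex_def
    by (auto simp: adj_rel_iff insert_commute intro: reach_sym)
  then show ?thesis ..
qed

lemma exit_vertex_unique:
  assumes blk: "is_block V E B F" and u: "exit_vertex B u" and v: "exit_vertex B v"
  shows "u = v"
proof (rule ccontr)
  assume "u \<noteq> v"
  obtain yu where yu: "yu \<notin> B" "{u, yu} \<in> E" "(yu, r) \<in> reach (V - B) E"
    using u unfolding exit_vertex_def by blast
  obtain yv where yv: "yv \<in> V - B" "{v, yv} \<in> E" "(yv, r) \<in> reach (V - B) E"
    using v unfolding exit_vertex_def by blast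
  have uv: "u \<in> B" "v \<in> B" using u v unfolding exit_vertex_def by auto
  have "V - B \<subseteq> V - {u}" using uv by blast
  then have "(yu, r) \<in> reach (V - {u}) E" "(r, yv) \<in> reach (V - {u}) E"
    using yu(3) yv(3) by (auto intro: reach_mono reach_sym)
  moreover have "(yv, v) \<in> adj_rel (V - {u}) E"
    using yv \<open>u \<noteq> v\<close> uv block_subset[OF blk] by (auto simp: adj_rel_iff insert_commute)
  ultimately have "(yu, v) \<in> reach (V - {u}) E" by (meson rtrancl.rtrancl_into_rtrancl rtrancl_trans)
  then show False using block_no_detour[OF blk uv(1) yu(1,2) _ uv(2)] by blast
qed

lemma block_root_eq: "r \<in> B \<Longrightarrow> block_root B = r"
  unfolding block_root_def by simp

lemma block_root_exit_vertex:
  assumes blk: "is_block V E B F" and "r \<notin> B"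
  shows "exit_vertex B (block_root B)"
proof -
  obtain x where x: "exit_vertex B x" using exit_vertex_exists[OF assms] ..
  have "exit_vertex B (THE x. exit_vertex B x)"
    by (rule theI[of _ x]) (use x exit_vertex_unique[OF blk] in blast)+
  then show ?thesis using \<open>r \<notin> B\<close> unfolding block_root_def by simp
qed

lemma block_root_in_block: "is_block V E B F \<Longrightarrow> block_root B \<in> B"
  using block_root_exit_vertex block_root_eq unfolding exit_vertex_def by (cases "r \<in> B") auto

lemma root_notin_nonroot_part: "r \<notin> nonroot_part B"
  unfolding nonroot_part_def using block_root_eq by (cases "r \<in> B") auto

lemma block_root_reach_root:
  assumes blk: "is_block V E B F" and x: "x \<in> B" "x \<noteq> block_root B"
  shows "(block_root B, r) \<in> reach (V - {x}) E"
proof (cases "r \<in> B")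
  case False
  then obtain y where y: "y \<in> V - B" "{block_root B, y} \<in> E" "(y, r) \<in> reach (V - B) E"
    using block_root_exit_vertex[OF blk] unfolding exit_vertex_def by blast
  have "(block_root B, y) \<in> adj_rel (V - {x}) E"
    using y x block_root_in_block[OF blk] block_subset[OF blk] by (auto simp: adj_rel_iff)
  moreover have "(y, r) \<in> reach (V - {x}) E" by (rule reach_mono[OF y(3)]) (use x in auto)
  ultimately show ?thesis by (meson converse_rtrancl_into_rtrancl)
qed (simp add: block_root_eq)

text \<open>If \<open>x\<close> lay in both, a neighbour of \<open>x\<close> in \<open>B\<close> would reach the root of \<open>C\<close> avoiding \<open>x\<close>,
  through the root of \<open>B\<close> and \<open>r\<close>.\<close>

lemma nonroot_parts_disjoint:
  assumes "B \<in> blocks" "C \<in> blocks" and x: "x \<in> nonroot_part B" "x \<in> nonroot_part C"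
  shows "B = C"
proof (rule ccontr)
  assume "B \<noteq> C"
  obtain F G where B: "is_block V E B F" and C: "is_block V E C G" using assms(1,2) unfolding blocks_def by blast
  have x: "x \<in> B" "x \<in> C" "x \<noteq> block_root B" "x \<noteq> block_root C"
    using x unfolding nonroot_part_def by auto
  have roots: "block_root B \<in> B" "block_root C \<in> C" using block_root_in_block B C by auto
  have BC: "z \<notin> C" if "z \<in> B" "z \<noteq> x" for z
    using blocks_eq_if_share_two_vertices[OF B C x(1,2) that(1)] that \<open>B \<noteq> C\<close> by auto
  have "B - {x} \<noteq> {}" using roots x by auto
  with block_nonseparable[OF B] have cB: "connected_graph (B - {x}) {e \<in> F. x \<notin> e}"
    by (rule nonseparable_delete_vertex)
  obtain b where "(x, b) \<in> adj_rel B F"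
    using connected_graphD[OF block_connected[OF B] x(1) roots(1)] x(3) by (metis converse_rtranclE)
  then have b: "b \<in> B" "{x, b} \<in> E" "b \<noteq> x"
    using block_edges_subset[OF B] singleton_notin_edges by (auto simp: adj_rel_iff)
  have "(b, block_root B) \<in> reach (V - {x}) E"
    by (rule reach_mono[OF connected_graphD[OF cB]])
      (use b x roots block_subset[OF B] block_edges_subset[OF B] in auto)
  also have "(block_root B, r) \<in> reach (V - {x}) E" using block_root_reach_root[OF B x(1,3)] .
  also have "(r, block_root C) \<in> reach (V - {x}) E"
    using block_root_reach_root[OF C x(2,4)] by (rule reach_sym)
  finally show False using block_no_detour[OF C x(2) BC[OF b(1,3)] b(2) _ roots(2)] by blast
qed

end

section \<open>Counting blocks against a resolving set\<close>

context rooted_graph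
begin

definition blocks_meeting :: "'a set \<Rightarrow> 'a set set" where
  "blocks_meeting S = {B \<in> blocks. nonroot_part B \<inter> S \<noteq> {}}"

lemma card_blocks_meeting_le:
  assumes "finite A"
  shows "card (blocks_meeting A) \<le> card (A - {r})"
proof -
  let ?M = "blocks_meeting A"
  define g where "g B = (SOME a. a \<in> nonroot_part B \<inter> A)" for B
  have g: "g B \<in> nonroot_part B \<inter> A" if "B \<in> ?M" for B
  proof -
    have "\<exists>a. a \<in> nonroot_part B \<inter> A" using that unfolding blocks_meeting_def by blast
    then show ?thesis unfolding g_def by (rule someI_ex)
  qed
  show ?thesis
  proof (rule card_inj_on_le)
    show "inj_on g ?M"
    proof (rule inj_onI)
      fix B1 B2 assume B: "B1 \<in> ?M" "B2 \<in> ?M" "g B1 = g B2"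
      have "g B1 \<in> nonroot_part B1" using g[OF B(1)] by blast
      moreover have "g B1 \<in> nonroot_part B2" using g[OF B(2)] B(3) by simp
      ultimately show "B1 = B2" using B(1,2) nonroot_parts_disjoint unfolding blocks_meeting_def by blast
    qed
    show "g ` ?M \<subseteq> A - {r}" using g root_notin_nonroot_part by blast
  qed (simp add: assms)
qed

text \<open>A block containing both \<open>x\<close> and \<open>w\<close> would be a child of \<open>B\<close> meeting \<open>W\<close>.\<close>

lemma kappa_eq_one_if_childless:
  assumes "W \<subseteq> V" and blk: "is_block V E B F" and nW: "nonroot_part B \<inter> W = {}"
    and childless: "\<And>C. C \<in> blocks \<Longrightarrow> block_root C \<in> nonroot_part B \<Longrightarrow> nonroot_part C \<inter> W = {}"
    and x: "x \<in> nonroot_part B" and w: "w \<in> W" "w \<noteq> block_root B"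
  shows "kappa V E x w = 1"
proof (rule ccontr)
  assume "kappa V E x w \<noteq> 1"
  moreover have "x \<noteq> w" "x \<in> V" using x w nW block_subset[OF blk] unfolding nonroot_part_def by auto
  ultimately obtain C G where C: "is_block V E C G" "x \<in> C" "w \<in> C"
    using kappa_ne_one_common_block w \<open>W \<subseteq> V\<close> by blast
  have "C \<in> blocks" "B \<in> blocks" using C blk unfolding blocks_def by auto
  have "C \<noteq> B" using C(3) w nW unfolding nonroot_part_def by auto
  then have "x = block_root C"
    using nonroot_parts_disjoint[OF \<open>B \<in> blocks\<close> \<open>C \<in> blocks\<close> x] C(2) unfolding nonroot_part_def by auto
  then have "w \<in> nonroot_part C \<inter> W" using C(3) w(1) \<open>x \<noteq> w\<close> unfolding nonroot_part_def by auto
  then show False using childless[OF \<open>C \<in> blocks\<close>] x \<open>x = block_root C\<close> by blast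
qed

text \<open>Otherwise \<open>\<kappa>(\<cdot>, root)\<close> would resolve the \<open>|B| - 1\<close> non-root vertices of \<open>B\<close> by values in
  \<open>{2..|B| - 1}\<close>.\<close>

lemma block_has_child_meeting:
  assumes res: "resolving V E W" and blk: "is_block V E B F" and nW: "nonroot_part B \<inter> W = {}"
    and nA: "\<forall>x\<in>nonroot_part B. \<exists>w\<in>W. kappa V E x w \<noteq> 1"
  shows "\<exists>C\<in>blocks_meeting W. block_root C \<in> nonroot_part B"
proof (rule ccontr)
  assume no_child: "\<not> ?thesis"
  have WV: "W \<subseteq> V" using res unfolding resolving_def by blast
  define c where "c = block_root B"
  have childless: "nonroot_part C \<inter> W = {}" if "C \<in> blocks" "block_root C \<in> nonroot_part B" for C
    using no_child that unfolding blocks_meeting_def by blast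
  have one: "kappa V E x w = 1" if "x \<in> nonroot_part B" "w \<in> W" "w \<noteq> c" for x w
    using kappa_eq_one_if_childless[OF WV blk nW childless that[unfolded c_def]] .
  have c: "c \<in> B" "finite B" "card B \<ge> 2"
    using block_root_in_block[OF blk] finite_block[OF blk] two_le_card_block[OF blk] unfolding c_def by auto
  have card_nonroot: "card (nonroot_part B) = card B - 1" unfolding nonroot_part_def c_def[symmetric]
    using c by simp
  have kappa_c: "kappa V E x c \<noteq> 1" if x: "x \<in> nonroot_part B" for x
  proof
    assume "kappa V E x c = 1"
    then have "\<forall>w\<in>W. kappa V E x w = 1" using one[OF x] by blast
    then show False using nA x by blast
  qed
  have "kappa V E x c \<in> enat ` {2..card B - 1}" if "x \<in> nonroot_part B" for x
    using kappa_in_block_range[OF blk _ c(1) _ kappa_c[OF that]] that unfolding nonroot_part_def c_def by auto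
  moreover have "inj_on (\<lambda>x. kappa V E x c) (nonroot_part B)"
  proof (rule inj_onI)
    fix x x' assume xx: "x \<in> nonroot_part B" "x' \<in> nonroot_part B" "kappa V E x c = kappa V E x' c"
    have "kappa V E x w = kappa V E x' w" if "w \<in> W" for w
      using xx(3) one[OF xx(1) that] one[OF xx(2) that] by (cases "w = c") simp_all
    then have "\<forall>w\<in>W. kappa V E x w = kappa V E x' w" by blast
    moreover have "x \<in> V" "x' \<in> V" using xx block_subset[OF blk] unfolding nonroot_part_def by auto
    ultimately show "x = x'" using res unfolding resolving_def by blast
  qed
  ultimately have "card (nonroot_part B) \<le> card (enat ` {2..card B - 1})"
    by (intro card_inj_on_le) auto
  also have "\<dots> \<le> card B - 2" using card_image_le[of "{2..card B - 1}" enat] by simp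
  finally show False using card_nonroot c(3) by linarith
qed

lemma card_childless_blocks_le:
  assumes res: "resolving V E W"
  shows "card {B \<in> blocks - blocks_meeting W. \<forall>x\<in>nonroot_part B. \<exists>w\<in>W. kappa V E x w \<noteq> 1}
    \<le> card (blocks_meeting W)" (is "card ?C \<le> _")
proof -
  define child where "child B = (SOME C. C \<in> blocks_meeting W \<and> block_root C \<in> nonroot_part B)" for B
  have child: "child B \<in> blocks_meeting W \<and> block_root (child B) \<in> nonroot_part B" if B: "B \<in> ?C" for B
  proof -
    obtain F where "is_block V E B F" using B unfolding blocks_def by blast
    then have "\<exists>C. C \<in> blocks_meeting W \<and> block_root C \<in> nonroot_part B"
      using block_has_child_meeting[OF res] B unfolding blocks_meeting_def by blast
    then show ?thesis unfolding child_def by (rule someI_ex)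
  qed
  show ?thesis
  proof (rule card_inj_on_le)
    show "inj_on child ?C"
    proof (rule inj_onI)
      fix B1 B2 assume B: "B1 \<in> ?C" "B2 \<in> ?C" "child B1 = child B2"
      have "block_root (child B1) \<in> nonroot_part B1" using child[OF B(1)] by blast
      moreover have "block_root (child B1) \<in> nonroot_part B2" using child[OF B(2)] B(3) by simp
      ultimately show "B1 = B2" using B(1,2) nonroot_parts_disjoint by blast
    qed
    show "child ` ?C \<subseteq> blocks_meeting W" using child by blast
    show "finite (blocks_meeting W)" unfolding blocks_meeting_def using finite_blocks by simp
  qed
qed

lemma num_blocks_le:
  assumes res: "resolving V E W" and "r \<in> W"
  shows "num_blocks V E + 1 \<le> 2 * card W"
proof -
  have "W \<subseteq> V" using res unfolding resolving_def by blast
  then have "finite W" using finite_vertices by (rule finite_subset)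
  define A where "A = {x \<in> V. \<forall>w\<in>W. kappa V E x w = 1}"
  have "finite A" unfolding A_def using finite_vertices by simp
  moreover have "a = b" if "a \<in> A" "b \<in> A" for a b
    using that res unfolding A_def resolving_def by auto
  ultimately have "card A \<le> 1" by (simp add: card_le_Suc0_iff_eq)
  define childless where
    "childless = {B \<in> blocks - blocks_meeting W. \<forall>x\<in>nonroot_part B. \<exists>w\<in>W. kappa V E x w \<noteq> 1}"
  let ?U = "blocks_meeting W \<union> blocks_meeting A \<union> childless"
  have "B \<in> childless" if "B \<in> blocks" "B \<notin> blocks_meeting W" "B \<notin> blocks_meeting A" for B
  proof -
    have "nonroot_part B \<subseteq> V" using that(1) block_subset unfolding blocks_def nonroot_part_def by blast
    then show ?thesis using that unfolding childless_def blocks_meeting_def A_def by blast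
  qed
  then have "blocks \<subseteq> ?U" by blast
  moreover have "finite ?U"
    by (rule finite_subset[OF _ finite_blocks]) (auto simp: blocks_meeting_def childless_def)
  ultimately have "card blocks \<le> card ?U" by (rule card_mono[rotated])
  also have "\<dots> \<le> card (blocks_meeting W) + card (blocks_meeting A) + card childless"
    using card_Un_le[of "blocks_meeting W \<union> blocks_meeting A" childless]
      card_Un_le[of "blocks_meeting W" "blocks_meeting A"] by linarith
  finally have "card blocks \<le> card (blocks_meeting W) + card (blocks_meeting A) + card childless" .
  moreover have "card childless \<le> card (blocks_meeting W)"
    unfolding childless_def by (rule card_childless_blocks_le[OF res])
  moreover have "card (blocks_meeting W) \<le> card W - 1"
    using card_blocks_meeting_le[OF \<open>finite W\<close>] \<open>r \<in> W\<close> \<open>finite W\<close> by simp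
  moreover have "card (blocks_meeting A) \<le> 1"
    using card_blocks_meeting_le[OF \<open>finite A\<close>] card_Diff1_le[of A r] \<open>card A \<le> 1\<close> by linarith
  moreover have "card W \<noteq> 0" using \<open>r \<in> W\<close> \<open>finite W\<close> by auto
  ultimately show ?thesis using num_blocks_eq_card_blocks by linarith
qed

end

lemma resolving_vertex_set: "resolving V E V"
  unfolding resolving_def
proof (intro conjI ballI impI)
  fix v1 v2 assume "v1 \<in> V" "\<forall>w\<in>V. kappa V E v1 w = kappa V E v2 w"
  then have "kappa V E v2 v1 = kappa V E v1 v1" by auto
  then show "v1 = v2" unfolding kappa_def by (auto split: if_splits)
qed simp

lemma cdim_attained:
  assumes "finite V"
  obtains W where "resolving V E W" "cdim V E = card W"
proof -
  let ?S = "{card W | W. resolving V E W}"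
  have "?S \<subseteq> {..card V}" unfolding resolving_def using assms by (auto intro: card_mono)
  then have "finite ?S" by (rule finite_subset) simp
  moreover have "card V \<in> ?S" using resolving_vertex_set by blast
  ultimately have "Min ?S \<in> ?S" by (intro Min_in) auto
  then show ?thesis using that unfolding cdim_def by auto
qed

lemma resolving_nonempty:
  assumes "resolving V E W" "u \<in> V" "v \<in> V" "u \<noteq> v"
  shows "W \<noteq> {}"
  using assms unfolding resolving_def by auto

theorem mainTheorem13:
  assumes "simple_graph V E" and "connected_graph V E" and "card V \<ge> 2"
  shows "real (cdim V E) \<ge> (real (num_blocks V E) + 1) / 2"
proof -
  interpret nontrivial_connected_graph V E using assms by unfold_locales
  obtain W where W: "resolving V E W" "cdim V E = card W"
    using cdim_attained[OF finite_vertices] by blast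
  obtain r where "r \<in> W"
    using resolving_nonempty[OF W(1)] two_distinct_vertices by (metis ex_in_conv)
  moreover have "W \<subseteq> V" using W(1) unfolding resolving_def by blast
  ultimately interpret rooted_graph V E r by unfold_locales blast
  have "num_blocks V E + 1 \<le> 2 * cdim V E" using num_blocks_le[OF W(1) \<open>r \<in> W\<close>] W(2) by simp
  then have "real (num_blocks V E + 1) \<le> real (2 * cdim V E)" by (simp only: of_nat_le_iff)
  then show ?thesis by simp
qed

end
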